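(* Let $\flat\in\{>,<\}$. For $\imath\in\{1,\dots,2n-1\}$, the set $\{r\in\mathbb Z\mid(\imath,\frac r2)\in\widehat I^{\mathrm{tw},\flat}_\xi\}$ is a $4$-segment if $\imath\ne n$ and a $2$-segment if $\imath=n$. (For $k\in\mathbb Z_{>0}$, a $k$-segment is a set $\{\ell+sk\mid s=0,\dots,N\}$ with $\ell\in\mathbb Z$, $N\in\mathbb Z_{\ge0}$.) Moreover, the following hold in $\Upsilon_{[\mathcal Q^\flat]}$, whose vertices are labelled by $\overline I^{\mathrm{tw},\flat}_\xi$. - (1) Let $i\le n-2$ and suppose $(i,r-2),(i,r+2)\in\overline I^{\mathrm{tw},\flat}_\xi$. Then $(i-1,r),(i+1,r)\in\overline I^{\mathrm{tw},\flat}_\xi$ (ignoring $(0,r)$ when $i=1$). There are arrows from $(i,r-2)$ to these vertices and from them to $(i,r+2)$, and these are all the arrows exiting $(i,r-2)$, respectively entering $(i,r+2)$. - (2) Suppose $(n-1,r-2),(n-1,r+2)\in\overline I^{\mathrm{tw},\flat}_\xi$. Then $(n-2,r),(n,r-1),(n,r+1)\in\overline I^{\mathrm{tw},\flat}_\xi$ (ignoring $(0,r)$ when $n=2$). There are arrows from $(n-1,r-2)$ to $(n-2,r)$ and $(n,r-1)$, and arrows from $(n-2,r)$ and $(n,r+1)$ to $(n-1,r+2)$. These are all the arrows exiting $(n-1,r-2)$, respectively entering $(n-1,r+2)$. - (3) Suppose $(n,r-1),(n,r+1)\in\overline I^{\mathrm{tw},\flat}_\xi$. Then $(n-1,r)\in\overline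 I^{\mathrm{tw},\flat}_\xi$. There are arrows from $(n,r-1)$ to $(n-1,r)$ and from $(n-1,r)$ to $(n,r+1)$, and these are all the arrows exiting $(n,r-1)$, respectively entering $(n,r+1)$.
   Context: Fix $n\ge2$. Let $\mathcal Q$ be a quiver with underlying graph the Dynkin diagram of type $\mathrm A_{2n-2}$ (vertices $1,\dots,2n-2$, edges $\{i,i+1\}$), and $\xi$ a height function: $\xi(j)=\xi(i)+1$ for each arrow $i\to j$. Let $\widehat I_\xi=\{(i,p):1\le i\le 2n-2,\ p\equiv\xi(i)\ \mathrm{mod}\ 2,\ \xi(2n-1-i)-(2n-1)<p\le\xi(i)\}$. This is the vertex set of the Auslander–Reiten quiver $\Gamma_{\mathcal Q}$, whose arrows are $(j,p-1)\to(i,p)$ for all $|i-j|=1$ with both endpoints in $\widehat I_\xi$. Let $\phi(i,p)=(i,p)$ for $i\le n-1$ and $\phi(i,p)=(i+1,p)$ for $i\ge n$. The twisted Auslander–Reiten quiver $\Upsilon_{[\mathcal Q^\flat]}$ ($\flat\in\{>,<\}$) has vertex set $\widehat I^{\mathrm{tw},\flat}_\xi$ consisting of: - $\phi(\widehat I_\xi)$; - a vertex $(n,p-\frac12)$ for each arrow $(j,p-1)\to(i,p)$ of $\Gamma_{\mathcal Q}$ with $\{i,j\}=\{n-1,n\}$; - one extra vertex: $(n,r_M+\frac12)$ if $\flat={>}$, or $(n,r_m-\frac12)$ if $\flat={<}$, where $r_M$, $r_m$ are the max and min of $\{p:(n-1,p)\text{ or }(n,p)\in\widehat I_\xi\}$.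 Its arrows are: - $\phi(j,p-1)\to\phi(i,p)$ for each arrow of $\Gamma_{\mathcal Q}$ with $\{i,j\}\ne\{n-1,n\}$; - $\phi(j,p-1)\to(n,p-\frac12)\to\phi(i,p)$ for each arrow $(j,p-1)\to(i,p)$ of $\Gamma_{\mathcal Q}$ with $\{i,j\}=\{n-1,n\}$; - if $\flat={>}$, the arrow $v_M\to(n,r_M+\frac12)$, where $v_M$ is the unique vertex of $\phi(\widehat I_\xi)$ with first coordinate in $\{n-1,n+1\}$ and second coordinate $r_M$; - if $\flat={<}$, the arrow $(n,r_m-\frac12)\to v_m$, where $v_m$ is the unique vertex of $\phi(\widehat I_\xi)$ with first coordinate in $\{n-1,n+1\}$ and second coordinate $r_m$. Vertices are relabelled by the injective map $(\imath,s)\mapsto(\imath,2s)$ if $\imath\le n$ and $(\imath,s)\mapsto(2n-\imath,2s)$ if $\imath>n$. The image is $\overline I^{\mathrm{tw},\flat}_\xi\subset\{1,\dots,n\}\times\mathbb Z$. *)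

theory Defs
  imports Main
begin

text \<open>Height function: the quiver Q on the Dynkin diagram A_{2n-2} is encoded by its
  height function xi (an arrow i -> j iff xi j = xi i + 1 for adjacent i, j).\<close>

definition is_height :: "nat \<Rightarrow> (nat \<Rightarrow> int) \<Rightarrow> bool" where
  "is_height n \<xi> \<longleftrightarrow> (\<forall>i. 1 \<le> i \<and> i + 1 \<le> 2*n - 2 \<longrightarrow> \<bar>\<xi> (i+1) - \<xi> i\<bar> = 1)"

datatype flat = Gt | Lt

definition Ihat :: "nat \<Rightarrow> (nat \<Rightarrow> int) \<Rightarrow> (nat \<times> int) set" where
  "Ihat n \<xi> = {(i, p). 1 \<le> i \<and> i \<le> 2*n - 2 \<and> even (p - \<xi> i)
      \<and> \<xi> (2*n - 1 - i) - (2 * int n - 1) < p \<and> p \<le> \<xi> i}"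

definition Gamma_arrows :: "nat \<Rightarrow> (nat \<Rightarrow> int) \<Rightarrow> ((nat \<times> int) \<times> (nat \<times> int)) set" where
  "Gamma_arrows n \<xi> = {((j, p - 1), (i, p)) | i j p.
      (j, p - 1) \<in> Ihat n \<xi> \<and> (i, p) \<in> Ihat n \<xi> \<and> (i = j + 1 \<or> j = i + 1)}"

definition phi :: "nat \<Rightarrow> nat \<times> int \<Rightarrow> nat \<times> int" where
  "phi n x = (if fst x \<le> n - 1 then fst x else fst x + 1, snd x)"

text \<open>Vertices of the twisted quiver have half-integer second coordinates; we store a
  vertex (i, s) as (i, 2 s) (doubled second coordinate), via dbl.\<close>
definition dbl :: "nat \<times> int \<Rightarrow> nat \<times> int" where
  "dbl x = (fst x, 2 * snd x)"

definition rM :: "nat \<Rightarrow> (nat \<Rightarrow> int) \<Rightarrow> int" where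
  "rM n \<xi> = Max {p. (n - 1, p) \<in> Ihat n \<xi> \<or> (n, p) \<in> Ihat n \<xi>}"

definition rm :: "nat \<Rightarrow> (nat \<Rightarrow> int) \<Rightarrow> int" where
  "rm n \<xi> = Min {p. (n - 1, p) \<in> Ihat n \<xi> \<or> (n, p) \<in> Ihat n \<xi>}"

definition Itw :: "nat \<Rightarrow> (nat \<Rightarrow> int) \<Rightarrow> flat \<Rightarrow> (nat \<times> int) set" where
  "Itw n \<xi> b =
     (dbl \<circ> phi n) ` Ihat n \<xi>
   \<union> {(n, 2 * p - 1) | i j p. ((j, p - 1), (i, p)) \<in> Gamma_arrows n \<xi> \<and> {i, j} = {n - 1, n}}
   \<union> {if b = Gt then (n, 2 * rM n \<xi> + 1) else (n, 2 * rm n \<xi> - 1)}"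

definition Tw_arrows :: "nat \<Rightarrow> (nat \<Rightarrow> int) \<Rightarrow> flat \<Rightarrow> ((nat \<times> int) \<times> (nat \<times> int)) set" where
  "Tw_arrows n \<xi> b =
     {(dbl (phi n (j, p - 1)), dbl (phi n (i, p))) | i j p.
        ((j, p - 1), (i, p)) \<in> Gamma_arrows n \<xi> \<and> {i, j} \<noteq> {n - 1, n}}
   \<union> {(dbl (phi n (j, p - 1)), (n, 2 * p - 1)) | i j p.
        ((j, p - 1), (i, p)) \<in> Gamma_arrows n \<xi> \<and> {i, j} = {n - 1, n}}
   \<union> {((n, 2 * p - 1), dbl (phi n (i, p))) | i j p.
        ((j, p - 1), (i, p)) \<in> Gamma_arrows n \<xi> \<and> {i, j} = {n - 1, n}}
   \<union> (if b = Gt then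
        {(v, (n, 2 * rM n \<xi> + 1)) | v. v \<in> (dbl \<circ> phi n) ` Ihat n \<xi>
            \<and> fst v \<in> {n - 1, n + 1} \<and> snd v = 2 * rM n \<xi>}
      else
        {((n, 2 * rm n \<xi> - 1), v) | v. v \<in> (dbl \<circ> phi n) ` Ihat n \<xi>
            \<and> fst v \<in> {n - 1, n + 1} \<and> snd v = 2 * rm n \<xi>})"

definition relabel :: "nat \<Rightarrow> nat \<times> int \<Rightarrow> nat \<times> int" where
  "relabel n x = (if fst x \<le> n then fst x else 2 * n - fst x, snd x)"

definition Ibar :: "nat \<Rightarrow> (nat \<Rightarrow> int) \<Rightarrow> flat \<Rightarrow> (nat \<times> int) set" where
  "Ibar n \<xi> b = relabel n ` Itw n \<xi> b"

definition Abar :: "nat \<Rightarrow> (nat \<Rightarrow> int) \<Rightarrow> flat \<Rightarrow> ((nat \<times> int) \<times> (nat \<times> int)) set" where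
  "Abar n \<xi> b = map_prod (relabel n) (relabel n) ` Tw_arrows n \<xi> b"

definition is_segment :: "int \<Rightarrow> int set \<Rightarrow> bool" where
  "is_segment k S \<longleftrightarrow> (\<exists>l (N::nat). S = {l + int s * k | s. s \<le> N})"

end

theory Submission
  imports Defs
begin

text \<open>
  Adjacent heights differ by one, so the height function is 1-Lipschitz and a row and its mirror
  row \<open>2n - 1 - j\<close> carry levels of opposite parity. Hence each row of \<open>\<Gamma>\<^sub>Q\<close> is a progression
  of step 2 between the bounds coming from \<open>\<xi> j\<close> and \<open>\<xi> (2n - 1 - j)\<close>, and two vertices
  \<open>(j, p \<plusminus> 1)\<close> force the vertices \<open>(j \<plusminus> 1, p)\<close> (the mesh of \<open>\<Gamma>\<^sub>Q\<close>). The central rows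
  \<open>n - 1\<close> and \<open>n\<close> interleave and fill the interval \<open>[r\<^sub>m, r\<^sub>M]\<close>, so the new vertices
  \<open>(n, p - 1/2)\<close> together with the extra vertex form a 2-segment. After relabelling, rows \<open>j\<close>
  and \<open>2n - 1 - j\<close> share a row of \<open>\<Upsilon>\<close>; by the parity remark two vertices of such a row two
  steps apart still come from a single row of \<open>\<Gamma>\<^sub>Q\<close>, and the three statements about arrows
  are read off from the mesh of \<open>\<Gamma>\<^sub>Q\<close>.
\<close>

lemma unit_steps_diff:
  fixes f :: "nat \<Rightarrow> int"
  assumes steps: "\<And>k. a \<le> k \<Longrightarrow> k < b \<Longrightarrow> \<bar>f (k + 1) - f k\<bar> = 1"
    and "a \<le> i" "i \<le> j" "j \<le> b"
  shows "\<bar>f j - f i\<bar> \<le> int (j - i) \<and> even (f j - f i + int (j - i))"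
proof -
  have "\<bar>f (i + d) - f i\<bar> \<le> int d \<and> even (f (i + d) - f i + int d)" if "i + d \<le> b" for d
    using that
  proof (induction d)
    case (Suc d)
    have "\<bar>f (i + d + 1) - f (i + d)\<bar> = 1" using steps Suc.prems \<open>a \<le> i\<close> by simp
    then show ?case using Suc by (simp add: abs_if split: if_splits; presburger)
  qed simp
  from this[of "j - i"] show ?thesis using assms by simp
qed

lemma is_segment_affine:
  fixes c d e lo hi :: int
  assumes "0 < d" "lo \<le> hi" "d dvd hi - lo"
  shows "is_segment (c * d) {c * q + e | q. lo \<le> q \<and> q \<le> hi \<and> d dvd q - lo}"
proof -
  define N where "N = nat ((hi - lo) div d)"
  have "{c * q + e | q. lo \<le> q \<and> q \<le> hi \<and> d dvd q - lo} = {(c * lo + e) + int s * (c * d) | s. s \<le> N}"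
  proof (intro set_eqI iffI)
    fix x assume "x \<in> {c * q + e | q. lo \<le> q \<and> q \<le> hi \<and> d dvd q - lo}"
    then obtain q t where q: "x = c * q + e" "lo \<le> q" "q \<le> hi" "q - lo = d * t" by blast
    have "0 \<le> t" using q assms by (smt (verit) zero_le_mult_iff)
    moreover have "t \<le> (hi - lo) div d"
      using zdiv_mono1[of "q - lo" "hi - lo" d] q assms by simp
    ultimately show "x \<in> {(c * lo + e) + int s * (c * d) | s. s \<le> N}"
      using q unfolding N_def by (intro CollectI exI[of _ "nat t"]) (auto simp: algebra_simps)
  next
    fix x assume "x \<in> {(c * lo + e) + int s * (c * d) | s. s \<le> N}"
    then obtain s where s: "x = (c * lo + e) + int s * (c * d)" "s \<le> N" by blast
    have "0 \<le> (hi - lo) div d" using assms by (simp add: pos_imp_zdiv_nonneg_iff)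
    then have "int s \<le> (hi - lo) div d" using s(2) unfolding N_def by linarith
    then have "d * int s \<le> hi - lo"
      using assms by (metis dvd_mult_div_cancel mult_left_mono order_less_imp_le)
    then show "x \<in> {c * q + e | q. lo \<le> q \<and> q \<le> hi \<and> d dvd q - lo}"
      using s assms by (intro CollectI exI[of _ "lo + d * int s"]) (auto simp: algebra_simps)
  qed
  then show ?thesis unfolding is_segment_def by blast
qed

text \<open>With \<open>a = \<xi> (n - 1)\<close> and \<open>c = \<xi> n\<close> these describe the two central rows of \<open>\<Gamma>\<^sub>Q\<close>,
  which alternate and jointly fill an interval of length \<open>2n - 2\<close>.\<close>

lemma interleaved_progressions_union:
  fixes a c m p :: int
  assumes "c = a + 1 \<or> c = a - 1"
  shows "((even (p - a) \<and> c - (2*m - 1) < p \<and> p \<le> a) \<or> (even (p - c) \<and> a - (2*m - 1) < p \<and> p \<le> c))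
      \<longleftrightarrow> max a c - (2*m - 2) \<le> p \<and> p \<le> max a c"
  using assms by (cases "c = a + 1") (simp_all add: max_def; presburger)+

lemma interleaved_progressions_parity:
  fixes a c m p :: int
  assumes "c = a + 1 \<or> c = a - 1" "max a c - (2*m - 2) \<le> p" "p \<le> max a c"
  shows "(even (p - a) \<and> c - (2*m - 1) < p \<and> p \<le> a) \<longleftrightarrow> even (p - a)"
    and "(even (p - c) \<and> a - (2*m - 1) < p \<and> p \<le> c) \<longleftrightarrow> odd (p - a)"
  using assms by (cases "c = a + 1"; simp add: max_def; presburger)+

locale height_function =
  fixes n :: nat and \<xi> :: "nat \<Rightarrow> int"
  assumes n_ge_2: "n \<ge> 2" and height: "is_height n \<xi>"
begin

lemma height_step:
  assumes "1 \<le> i" "i + 1 \<le> 2*n - 2"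
  shows "\<xi> (i + 1) = \<xi> i + 1 \<or> \<xi> (i + 1) = \<xi> i - 1"
  using height assms unfolding is_height_def by fastforce

lemma height_step_mirror:
  assumes "1 \<le> i" "i + 1 \<le> 2*n - 2"
  shows "\<xi> (2*n - 1 - i) = \<xi> (2*n - 1 - (i + 1)) + 1 \<or> \<xi> (2*n - 1 - i) = \<xi> (2*n - 1 - (i + 1)) - 1"
proof -
  have "2*n - 1 - i = (2*n - 1 - (i + 1)) + 1" using assms by simp
  then show ?thesis using height_step[of "2*n - 1 - (i + 1)"] assms by simp
qed

lemma height_mirror:
  assumes "1 \<le> i" "i \<le> 2*n - 2"
  shows "odd (\<xi> (2*n - 1 - i) - \<xi> i) \<and> \<bar>\<xi> (2*n - 1 - i) - \<xi> i\<bar> \<le> 2 * int n - 3"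
proof -
  have steps: "\<And>k. 1 \<le> k \<Longrightarrow> k < 2*n - 2 \<Longrightarrow> \<bar>\<xi> (k + 1) - \<xi> k\<bar> = 1"
    using height unfolding is_height_def by simp
  let ?i' = "2*n - 1 - i"
  show ?thesis
  proof (cases "i \<le> ?i'")
    case True
    have "int (?i' - i) = 2 * int n - 1 - 2 * int i" using True assms by linarith
    then show ?thesis
      using unit_steps_diff[of 1 "2*n - 2" \<xi> i ?i', OF steps] True assms by simp presburger
  next
    case False
    have "int (i - ?i') = 2 * int i - 2 * int n + 1" using False assms by linarith
    then show ?thesis
      using unit_steps_diff[of 1 "2*n - 2" \<xi> ?i' i, OF steps] False assms
      by (simp add: abs_minus_commute) presburger
  qed
qed

lemma mem_Ihat:
  "(i, p) \<in> Ihat n \<xi> \<longleftrightarrow> 1 \<le> i \<and> i \<le> 2*n - 2 \<and> even (p - \<xi> i)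
      \<and> \<xi> (2*n - 1 - i) - (2 * int n - 1) < p \<and> p \<le> \<xi> i"
  by (simp add: Ihat_def)

lemma Ihat_row_range: "(j, q) \<in> Ihat n \<xi> \<Longrightarrow> 1 \<le> j \<and> j \<le> 2*n - 2"
  by (simp add: mem_Ihat)

lemma Ihat_mesh_succ:
  assumes "(i, p - 1) \<in> Ihat n \<xi>" "(i, p + 1) \<in> Ihat n \<xi>" "i + 1 \<le> 2*n - 2"
  shows "(i + 1, p) \<in> Ihat n \<xi>"
proof -
  have i: "1 \<le> i" "even (p - 1 - \<xi> i)" "\<xi> (2*n - 1 - i) - (2 * int n - 1) < p - 1" "p + 1 \<le> \<xi> i"
    using assms by (auto simp: mem_Ihat)
  then show ?thesis
    using height_step[of i] height_step_mirror[of i] assms(3) unfolding mem_Ihat by auto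
qed

lemma Ihat_mesh_pred:
  assumes "(i, p - 1) \<in> Ihat n \<xi>" "(i, p + 1) \<in> Ihat n \<xi>" "2 \<le> i"
  shows "(i - 1, p) \<in> Ihat n \<xi>"
proof -
  have i: "i \<le> 2*n - 2" "even (p - 1 - \<xi> i)" "\<xi> (2*n - 1 - i) - (2 * int n - 1) < p - 1" "p + 1 \<le> \<xi> i"
    using assms by (auto simp: mem_Ihat)
  moreover obtain k where "i = k + 1" "1 \<le> k" using assms(3) by (intro that[of "i - 1"]) simp_all
  ultimately show ?thesis
    using height_step[of k] height_step_mirror[of k] unfolding mem_Ihat by auto
qed

definition central_top :: int where
  "central_top = max (\<xi> (n - 1)) (\<xi> n)"

lemma central_height_step: "\<xi> n = \<xi> (n - 1) + 1 \<or> \<xi> n = \<xi> (n - 1) - 1"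
  using height_step[of "n - 1"] n_ge_2 by simp

lemma mem_Ihat_central:
  "(n - 1, p) \<in> Ihat n \<xi> \<longleftrightarrow> even (p - \<xi> (n - 1)) \<and> \<xi> n - (2 * int n - 1) < p \<and> p \<le> \<xi> (n - 1)"
  "(n, p) \<in> Ihat n \<xi> \<longleftrightarrow> even (p - \<xi> n) \<and> \<xi> (n - 1) - (2 * int n - 1) < p \<and> p \<le> \<xi> n"
proof -
  have "2*n - 1 - (n - 1) = n" "2*n - 1 - n = n - 1" using n_ge_2 by auto
  then show "(n - 1, p) \<in> Ihat n \<xi> \<longleftrightarrow> even (p - \<xi> (n - 1)) \<and> \<xi> n - (2 * int n - 1) < p \<and> p \<le> \<xi> (n - 1)"
    and "(n, p) \<in> Ihat n \<xi> \<longleftrightarrow> even (p - \<xi> n) \<and> \<xi> (n - 1) - (2 * int n - 1) < p \<and> p \<le> \<xi> n"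
    using n_ge_2 unfolding mem_Ihat by auto
qed

lemma central_rows_top:
  "((n - 1, p) \<in> Ihat n \<xi> \<or> (n, p) \<in> Ihat n \<xi>) \<longleftrightarrow>
     central_top - (2 * int n - 2) \<le> p \<and> p \<le> central_top"
  unfolding mem_Ihat_central central_top_def
  using interleaved_progressions_union[OF central_height_step] by blast

lemma central_levels:
  "{p. (n - 1, p) \<in> Ihat n \<xi> \<or> (n, p) \<in> Ihat n \<xi>} = {central_top - (2 * int n - 2)..central_top}"
  by (intro set_eqI) (simp only: mem_Collect_eq atLeastAtMost_iff central_rows_top)

lemma rM_eq: "rM n \<xi> = central_top"
  unfolding rM_def central_levels using n_ge_2 by (intro Max_eqI) auto

lemma rm_eq: "rm n \<xi> = central_top - (2 * int n - 2)"
  unfolding rm_def central_levels using n_ge_2 by (intro Min_eqI) auto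

lemma rM_minus_rm: "rM n \<xi> - rm n \<xi> = 2 * int n - 2"
  by (simp add: rM_eq rm_eq)

lemma central_rows:
  "((n - 1, p) \<in> Ihat n \<xi> \<or> (n, p) \<in> Ihat n \<xi>) \<longleftrightarrow> rm n \<xi> \<le> p \<and> p \<le> rM n \<xi>"
  unfolding rM_eq rm_eq by (rule central_rows_top)

lemma central_row_parity:
  assumes "rm n \<xi> \<le> p" "p \<le> rM n \<xi>"
  shows "(n - 1, p) \<in> Ihat n \<xi> \<longleftrightarrow> even (p - \<xi> (n - 1))"
    and "(n, p) \<in> Ihat n \<xi> \<longleftrightarrow> odd (p - \<xi> (n - 1))"
  using assms unfolding mem_Ihat_central rM_eq rm_eq central_top_def
  using interleaved_progressions_parity[OF central_height_step] by blast+

lemma mem_Gamma_arrows: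
  "(x, y) \<in> Gamma_arrows n \<xi> \<longleftrightarrow>
     snd x = snd y - 1 \<and> x \<in> Ihat n \<xi> \<and> y \<in> Ihat n \<xi> \<and> (fst y = fst x + 1 \<or> fst x = fst y + 1)"
  unfolding Gamma_arrows_def by (cases x; cases y) auto

lemma central_pair_iff: "{i, j} = {n - 1, n} \<longleftrightarrow> (i = n - 1 \<and> j = n) \<or> (i = n \<and> j = n - 1)"
  using n_ge_2 by (auto simp: doubleton_eq_iff)

lemma central_arrow_iff:
  "(\<exists>i j. ((j, p - 1), (i, p)) \<in> Gamma_arrows n \<xi> \<and> {i, j} = {n - 1, n}) \<longleftrightarrow>
     rm n \<xi> + 1 \<le> p \<and> p \<le> rM n \<xi>"
proof
  assume "\<exists>i j. ((j, p - 1), (i, p)) \<in> Gamma_arrows n \<xi> \<and> {i, j} = {n - 1, n}"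
  then have "(n - 1, p - 1) \<in> Ihat n \<xi> \<or> (n, p - 1) \<in> Ihat n \<xi>" "(n - 1, p) \<in> Ihat n \<xi> \<or> (n, p) \<in> Ihat n \<xi>"
    unfolding mem_Gamma_arrows central_pair_iff by auto
  then show "rm n \<xi> + 1 \<le> p \<and> p \<le> rM n \<xi>" unfolding central_rows by simp
next
  assume p: "rm n \<xi> + 1 \<le> p \<and> p \<le> rM n \<xi>"
  show "\<exists>i j. ((j, p - 1), (i, p)) \<in> Gamma_arrows n \<xi> \<and> {i, j} = {n - 1, n}"
  proof (cases "even (p - \<xi> (n - 1))")
    case True
    then have "(n - 1, p) \<in> Ihat n \<xi>" "(n, p - 1) \<in> Ihat n \<xi>" using central_row_parity p by auto
    then show ?thesis
      using n_ge_2 unfolding mem_Gamma_arrows central_pair_iff by (intro exI[of _ "n - 1"] exI[of _ n]) auto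
  next
    case False
    then have "(n, p) \<in> Ihat n \<xi>" "(n - 1, p - 1) \<in> Ihat n \<xi>" using central_row_parity p by auto
    then show ?thesis
      using n_ge_2 unfolding mem_Gamma_arrows central_pair_iff by (intro exI[of _ n] exI[of _ "n - 1"]) auto
  qed
qed

text \<open>The map \<open>\<phi>\<close> followed by the relabelling sends row \<open>j\<close> of \<open>\<Gamma>\<^sub>Q\<close> to row \<open>fold_row j\<close>: the
  Dynkin diagram \<open>A\<^sub>2\<^sub>n\<^sub>-\<^sub>2\<close> is folded onto \<open>{1, \<dots>, n - 1}\<close>.\<close>

definition fold_row :: "nat \<Rightarrow> nat" where
  "fold_row j = (if j \<le> n - 1 then j else 2*n - 1 - j)"

lemma relabel_phi: "j \<le> 2*n - 2 \<Longrightarrow> relabel n (dbl (phi n (j, q))) = (fold_row j, 2*q)"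
  using n_ge_2 unfolding relabel_def dbl_def phi_def fold_row_def by auto

lemma relabel_phi_Ihat: "(j, q) \<in> Ihat n \<xi> \<Longrightarrow> relabel n (dbl (phi n (j, q))) = (fold_row j, 2*q)"
  using relabel_phi Ihat_row_range by simp

lemma relabel_row_n: "relabel n (n, s) = (n, s)"
  unfolding relabel_def by simp

lemma fold_row_central: "fold_row (n - 1) = n - 1" "fold_row n = n - 1"
  using n_ge_2 unfolding fold_row_def by auto

lemma fold_row_range: "1 \<le> j \<Longrightarrow> j \<le> 2*n - 2 \<Longrightarrow> 1 \<le> fold_row j \<and> fold_row j \<le> n - 1"
  unfolding fold_row_def using n_ge_2 by auto

lemma fold_row_cases: "1 \<le> j \<Longrightarrow> j \<le> 2*n - 2 \<Longrightarrow> j = fold_row j \<or> j = 2*n - 1 - fold_row j"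
  unfolding fold_row_def using n_ge_2 by auto

lemma fold_row_adjacent:
  assumes "1 \<le> i" "i \<le> 2*n - 2" "1 \<le> j" "j \<le> 2*n - 2" "i = j + 1 \<or> j = i + 1" "{i, j} \<noteq> {n - 1, n}"
  shows "fold_row i = fold_row j + 1 \<or> fold_row i + 1 = fold_row j"
  using assms n_ge_2 central_pair_iff unfolding fold_row_def by auto

definition extra_level :: "flat \<Rightarrow> int" where
  "extra_level b = (if b = Gt then 2 * rM n \<xi> + 1 else 2 * rm n \<xi> - 1)"

lemma Itw_eq:
  "Itw n \<xi> b = (dbl \<circ> phi n) ` Ihat n \<xi> \<union> {(n, 2*p - 1) | p. rm n \<xi> + 1 \<le> p \<and> p \<le> rM n \<xi>}
     \<union> {(n, extra_level b)}"
proof -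
  have "{(n, 2*p - 1) | i j p. ((j, p - 1), (i, p)) \<in> Gamma_arrows n \<xi> \<and> {i, j} = {n - 1, n}}
      = {(n, 2*p - 1) | p. rm n \<xi> + 1 \<le> p \<and> p \<le> rM n \<xi>}"
    using central_arrow_iff by blast
  then show ?thesis unfolding Itw_def extra_level_def by (cases b) simp_all
qed

lemma Ibar_eq:
  "Ibar n \<xi> b = (\<lambda>(j, q). (fold_row j, 2*q)) ` Ihat n \<xi>
     \<union> {(n, 2*p - 1) | p. rm n \<xi> + 1 \<le> p \<and> p \<le> rM n \<xi>} \<union> {(n, extra_level b)}"
proof -
  have "relabel n ` (dbl \<circ> phi n) ` Ihat n \<xi> = (\<lambda>(j, q). (fold_row j, 2*q)) ` Ihat n \<xi>"
    unfolding image_comp by (intro image_cong refl) (auto simp: relabel_phi_Ihat)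
  moreover have "relabel n ` {(n, 2*p - 1) | p. rm n \<xi> + 1 \<le> p \<and> p \<le> rM n \<xi>}
      = {(n, 2*p - 1) | p. rm n \<xi> + 1 \<le> p \<and> p \<le> rM n \<xi>}"
    by (auto simp: relabel_row_n image_iff)
  ultimately show ?thesis unfolding Ibar_def Itw_eq image_Un by (simp add: relabel_row_n)
qed

lemma mem_Ibar_off_n:
  "a \<noteq> n \<Longrightarrow> (a, s) \<in> Ibar n \<xi> b \<longleftrightarrow> (\<exists>j q. (j, q) \<in> Ihat n \<xi> \<and> a = fold_row j \<and> s = 2*q)"
  unfolding Ibar_eq by auto

lemma mem_Ibar_n:
  "(n, s) \<in> Ibar n \<xi> b \<longleftrightarrow> (\<exists>p. rm n \<xi> + 1 \<le> p \<and> p \<le> rM n \<xi> \<and> s = 2*p - 1) \<or> s = extra_level b"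
proof -
  have "fold_row j \<noteq> n" if "(j, q) \<in> Ihat n \<xi>" for j q
    using fold_row_range Ihat_row_range[OF that] n_ge_2 by fastforce
  then show ?thesis unfolding Ibar_eq by (auto dest: sym)
qed

lemma relabel_central_vertex:
  assumes "v \<in> (dbl \<circ> phi n) ` Ihat n \<xi>" "fst v \<in> {n - 1, n + 1}"
  shows "relabel n v = (n - 1, snd v)"
  using assms n_ge_2 unfolding relabel_def by (cases v) auto

lemma central_vertex_exists:
  assumes "rm n \<xi> \<le> p" "p \<le> rM n \<xi>"
  obtains v where "v \<in> (dbl \<circ> phi n) ` Ihat n \<xi>" "fst v \<in> {n - 1, n + 1}" "snd v = 2*p"
proof -
  obtain k where k: "(k, p) \<in> Ihat n \<xi>" "k \<in> {n - 1, n}"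
    using central_rows assms by blast
  have "dbl (phi n (k, p)) \<in> (dbl \<circ> phi n) ` Ihat n \<xi>" by (rule image_eqI[OF _ k(1)]) simp
  moreover have "fst (dbl (phi n (k, p))) \<in> {n - 1, n + 1}" "snd (dbl (phi n (k, p))) = 2*p"
    using k(2) n_ge_2 by (auto simp: dbl_def phi_def)
  ultimately show thesis by (rule that)
qed

lemma relabel_central_arrow:
  assumes "((j, p - 1), (i, p)) \<in> Gamma_arrows n \<xi>" "{i, j} = {n - 1, n}"
  shows "relabel n (dbl (phi n (j, p - 1))) = (n - 1, 2*p - 2)"
    and "relabel n (dbl (phi n (i, p))) = (n - 1, 2*p)"
proof -
  have "(j, p - 1) \<in> Ihat n \<xi>" "(i, p) \<in> Ihat n \<xi>" "i \<in> {n - 1, n}" "j \<in> {n - 1, n}"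
    using assms unfolding mem_Gamma_arrows central_pair_iff by auto
  then show "relabel n (dbl (phi n (j, p - 1))) = (n - 1, 2*p - 2)"
    and "relabel n (dbl (phi n (i, p))) = (n - 1, 2*p)"
    using n_ge_2 by (auto simp: relabel_phi_Ihat fold_row_def)
qed

lemma relabel_plain_arrows:
  "map_prod (relabel n) (relabel n) ` {(dbl (phi n (j, p - 1)), dbl (phi n (i, p))) | i j p.
      ((j, p - 1), (i, p)) \<in> Gamma_arrows n \<xi> \<and> {i, j} \<noteq> {n - 1, n}}
    = {((fold_row j, 2*p - 2), (fold_row i, 2*p)) | i j p.
      (j, p - 1) \<in> Ihat n \<xi> \<and> (i, p) \<in> Ihat n \<xi> \<and> (i = j + 1 \<or> j = i + 1) \<and> {i, j} \<noteq> {n - 1, n}}"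
proof (intro set_eqI iffI)
  fix e assume "e \<in> map_prod (relabel n) (relabel n) ` {(dbl (phi n (j, p - 1)), dbl (phi n (i, p))) | i j p.
      ((j, p - 1), (i, p)) \<in> Gamma_arrows n \<xi> \<and> {i, j} \<noteq> {n - 1, n}}"
  then obtain i j p where "((j, p - 1), (i, p)) \<in> Gamma_arrows n \<xi>" "{i, j} \<noteq> {n - 1, n}"
      "e = map_prod (relabel n) (relabel n) (dbl (phi n (j, p - 1)), dbl (phi n (i, p)))"
    by (elim imageE CollectE exE conjE) (rule that; simp)
  then show "e \<in> {((fold_row j, 2*p - 2), (fold_row i, 2*p)) | i j p.
      (j, p - 1) \<in> Ihat n \<xi> \<and> (i, p) \<in> Ihat n \<xi> \<and> (i = j + 1 \<or> j = i + 1) \<and> {i, j} \<noteq> {n - 1, n}}"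
    unfolding mem_Gamma_arrows by (auto simp: relabel_phi_Ihat)
next
  fix e assume "e \<in> {((fold_row j, 2*p - 2), (fold_row i, 2*p)) | i j p.
      (j, p - 1) \<in> Ihat n \<xi> \<and> (i, p) \<in> Ihat n \<xi> \<and> (i = j + 1 \<or> j = i + 1) \<and> {i, j} \<noteq> {n - 1, n}}"
  then obtain i j p where "(j, p - 1) \<in> Ihat n \<xi>" "(i, p) \<in> Ihat n \<xi>" "i = j + 1 \<or> j = i + 1"
      "{i, j} \<noteq> {n - 1, n}" "e = ((fold_row j, 2*p - 2), (fold_row i, 2*p))"
    by blast
  then show "e \<in> map_prod (relabel n) (relabel n) ` {(dbl (phi n (j, p - 1)), dbl (phi n (i, p))) | i j p.
      ((j, p - 1), (i, p)) \<in> Gamma_arrows n \<xi> \<and> {i, j} \<noteq> {n - 1, n}}"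
    unfolding mem_Gamma_arrows
    by (intro image_eqI[of _ _ "(dbl (phi n (j, p - 1)), dbl (phi n (i, p)))"]) (auto simp: relabel_phi_Ihat)
qed

lemma relabel_arrows_into_n:
  "map_prod (relabel n) (relabel n) ` {(dbl (phi n (j, p - 1)), (n, 2*p - 1)) | i j p.
      ((j, p - 1), (i, p)) \<in> Gamma_arrows n \<xi> \<and> {i, j} = {n - 1, n}}
    = {((n - 1, 2*p - 2), (n, 2*p - 1)) | p. rm n \<xi> + 1 \<le> p \<and> p \<le> rM n \<xi>}"
proof (intro set_eqI iffI)
  fix e assume "e \<in> map_prod (relabel n) (relabel n) ` {(dbl (phi n (j, p - 1)), (n, 2*p - 1)) | i j p.
      ((j, p - 1), (i, p)) \<in> Gamma_arrows n \<xi> \<and> {i, j} = {n - 1, n}}"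
  then obtain i j p where g: "((j, p - 1), (i, p)) \<in> Gamma_arrows n \<xi>" "{i, j} = {n - 1, n}"
      "e = map_prod (relabel n) (relabel n) (dbl (phi n (j, p - 1)), (n, 2*p - 1))"
    by (elim imageE CollectE exE conjE) (rule that; simp)
  moreover have "rm n \<xi> + 1 \<le> p \<and> p \<le> rM n \<xi>" using g(1,2) central_arrow_iff by blast
  ultimately show "e \<in> {((n - 1, 2*p - 2), (n, 2*p - 1)) | p. rm n \<xi> + 1 \<le> p \<and> p \<le> rM n \<xi>}"
    using relabel_central_arrow(1)[OF g(1,2)] by (auto simp: relabel_row_n)
next
  fix e assume "e \<in> {((n - 1, 2*p - 2), (n, 2*p - 1)) | p. rm n \<xi> + 1 \<le> p \<and> p \<le> rM n \<xi>}"
  then obtain p where p: "rm n \<xi> + 1 \<le> p" "p \<le> rM n \<xi>" "e = ((n - 1, 2*p - 2), (n, 2*p - 1))"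
    by blast
  then obtain i j where "((j, p - 1), (i, p)) \<in> Gamma_arrows n \<xi>" "{i, j} = {n - 1, n}"
    using central_arrow_iff by blast
  then show "e \<in> map_prod (relabel n) (relabel n) ` {(dbl (phi n (j, p - 1)), (n, 2*p - 1)) | i j p.
      ((j, p - 1), (i, p)) \<in> Gamma_arrows n \<xi> \<and> {i, j} = {n - 1, n}}"
    using p(3) relabel_central_arrow
    by (intro image_eqI[of _ _ "(dbl (phi n (j, p - 1)), (n, 2*p - 1))"]) (auto simp: relabel_row_n)
qed

lemma relabel_arrows_out_of_n:
  "map_prod (relabel n) (relabel n) ` {((n, 2*p - 1), dbl (phi n (i, p))) | i j p.
      ((j, p - 1), (i, p)) \<in> Gamma_arrows n \<xi> \<and> {i, j} = {n - 1, n}}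
    = {((n, 2*p - 1), (n - 1, 2*p)) | p. rm n \<xi> + 1 \<le> p \<and> p \<le> rM n \<xi>}"
proof (intro set_eqI iffI)
  fix e assume "e \<in> map_prod (relabel n) (relabel n) ` {((n, 2*p - 1), dbl (phi n (i, p))) | i j p.
      ((j, p - 1), (i, p)) \<in> Gamma_arrows n \<xi> \<and> {i, j} = {n - 1, n}}"
  then obtain i j p where g: "((j, p - 1), (i, p)) \<in> Gamma_arrows n \<xi>" "{i, j} = {n - 1, n}"
      "e = map_prod (relabel n) (relabel n) ((n, 2*p - 1), dbl (phi n (i, p)))"
    by (elim imageE CollectE exE conjE) (rule that; simp)
  moreover have "rm n \<xi> + 1 \<le> p \<and> p \<le> rM n \<xi>" using g(1,2) central_arrow_iff by blast
  ultimately show "e \<in> {((n, 2*p - 1), (n - 1, 2*p)) | p. rm n \<xi> + 1 \<le> p \<and> p \<le> rM n \<xi>}"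
    using relabel_central_arrow(2)[OF g(1,2)] by (auto simp: relabel_row_n)
next
  fix e assume "e \<in> {((n, 2*p - 1), (n - 1, 2*p)) | p. rm n \<xi> + 1 \<le> p \<and> p \<le> rM n \<xi>}"
  then obtain p where p: "rm n \<xi> + 1 \<le> p" "p \<le> rM n \<xi>" "e = ((n, 2*p - 1), (n - 1, 2*p))"
    by blast
  then obtain i j where "((j, p - 1), (i, p)) \<in> Gamma_arrows n \<xi>" "{i, j} = {n - 1, n}"
    using central_arrow_iff by blast
  then show "e \<in> map_prod (relabel n) (relabel n) ` {((n, 2*p - 1), dbl (phi n (i, p))) | i j p.
      ((j, p - 1), (i, p)) \<in> Gamma_arrows n \<xi> \<and> {i, j} = {n - 1, n}}"
    using p(3) relabel_central_arrow
    by (intro image_eqI[of _ _ "((n, 2*p - 1), dbl (phi n (i, p)))"]) (auto simp: relabel_row_n)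
qed

lemma relabel_central_vertices:
  assumes "rm n \<xi> \<le> p" "p \<le> rM n \<xi>"
  shows "relabel n ` {v. v \<in> (dbl \<circ> phi n) ` Ihat n \<xi> \<and> fst v \<in> {n - 1, n + 1} \<and> snd v = 2*p}
      = {(n - 1, 2*p)}"
proof
  obtain v where v: "v \<in> (dbl \<circ> phi n) ` Ihat n \<xi>" "fst v \<in> {n - 1, n + 1}" "snd v = 2*p"
    using central_vertex_exists assms by blast
  then have "(n - 1, 2*p) = relabel n v" using relabel_central_vertex by simp
  then have "(n - 1, 2*p) \<in> relabel n ` {v. v \<in> (dbl \<circ> phi n) ` Ihat n \<xi> \<and> fst v \<in> {n - 1, n + 1} \<and> snd v = 2*p}"
    using v by (intro rev_image_eqI) simp_all
  then show "{(n - 1, 2*p)} \<subseteq> relabel n ` {v. v \<in> (dbl \<circ> phi n) ` Ihat n \<xi> \<and> fst v \<in> {n - 1, n + 1} \<and> snd v = 2*p}"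
    by (simp only: insert_subset empty_subsetI simp_thms)
next
  show "relabel n ` {v. v \<in> (dbl \<circ> phi n) ` Ihat n \<xi> \<and> fst v \<in> {n - 1, n + 1} \<and> snd v = 2*p} \<subseteq> {(n - 1, 2*p)}"
  proof
    fix x assume "x \<in> relabel n ` {v. v \<in> (dbl \<circ> phi n) ` Ihat n \<xi> \<and> fst v \<in> {n - 1, n + 1} \<and> snd v = 2*p}"
    then obtain v where "v \<in> {v. v \<in> (dbl \<circ> phi n) ` Ihat n \<xi> \<and> fst v \<in> {n - 1, n + 1} \<and> snd v = 2*p}"
        "x = relabel n v"
      by (rule imageE)
    then show "x \<in> {(n - 1, 2*p)}" using relabel_central_vertex[of v] by simp
  qed
qed

lemma relabel_extra_arrow:
  "map_prod (relabel n) (relabel n) ` (if b = Gt then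
        {(v, (n, 2 * rM n \<xi> + 1)) | v. v \<in> (dbl \<circ> phi n) ` Ihat n \<xi>
            \<and> fst v \<in> {n - 1, n + 1} \<and> snd v = 2 * rM n \<xi>}
      else
        {((n, 2 * rm n \<xi> - 1), v) | v. v \<in> (dbl \<circ> phi n) ` Ihat n \<xi>
            \<and> fst v \<in> {n - 1, n + 1} \<and> snd v = 2 * rm n \<xi>})
    = (if b = Gt then {((n - 1, 2 * rM n \<xi>), (n, 2 * rM n \<xi> + 1))}
      else {((n, 2 * rm n \<xi> - 1), (n - 1, 2 * rm n \<xi>))})"
proof -
  let ?rel = "map_prod (relabel n) (relabel n)"
  have "rm n \<xi> \<le> rM n \<xi>" using rM_minus_rm n_ge_2 by simp
  have top: "relabel n ` {v. v \<in> (dbl \<circ> phi n) ` Ihat n \<xi> \<and> fst v \<in> {n - 1, n + 1} \<and> snd v = 2 * rM n \<xi>}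
      = {(n - 1, 2 * rM n \<xi>)}"
    and bottom: "relabel n ` {v. v \<in> (dbl \<circ> phi n) ` Ihat n \<xi> \<and> fst v \<in> {n - 1, n + 1} \<and> snd v = 2 * rm n \<xi>}
      = {(n - 1, 2 * rm n \<xi>)}"
    using \<open>rm n \<xi> \<le> rM n \<xi>\<close> by (intro relabel_central_vertices; simp)+
  have pair_image: "?rel ` {(v, c) | v. P v} = (\<lambda>x. (x, relabel n c)) ` (relabel n ` {v. P v})"
    "?rel ` {(c, v) | v. P v} = (\<lambda>x. (relabel n c, x)) ` (relabel n ` {v. P v})" for c P
    by (simp_all only: setcompr_eq_image image_image map_prod_simp)
  have "?rel ` {(v, (n, 2 * rM n \<xi> + 1)) | v. v \<in> (dbl \<circ> phi n) ` Ihat n \<xi>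
            \<and> fst v \<in> {n - 1, n + 1} \<and> snd v = 2 * rM n \<xi>} = {((n - 1, 2 * rM n \<xi>), (n, 2 * rM n \<xi> + 1))}"
    "?rel ` {((n, 2 * rm n \<xi> - 1), v) | v. v \<in> (dbl \<circ> phi n) ` Ihat n \<xi>
            \<and> fst v \<in> {n - 1, n + 1} \<and> snd v = 2 * rm n \<xi>} = {((n, 2 * rm n \<xi> - 1), (n - 1, 2 * rm n \<xi>))}"
    unfolding pair_image top bottom by (simp_all add: relabel_row_n)
  then show ?thesis by (cases b) simp_all
qed

lemma Abar_eq:
  "Abar n \<xi> b =
     {((fold_row j, 2*p - 2), (fold_row i, 2*p)) | i j p.
        (j, p - 1) \<in> Ihat n \<xi> \<and> (i, p) \<in> Ihat n \<xi> \<and> (i = j + 1 \<or> j = i + 1) \<and> {i, j} \<noteq> {n - 1, n}}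
   \<union> {((n - 1, 2*p - 2), (n, 2*p - 1)) | p. rm n \<xi> + 1 \<le> p \<and> p \<le> rM n \<xi>}
   \<union> {((n, 2*p - 1), (n - 1, 2*p)) | p. rm n \<xi> + 1 \<le> p \<and> p \<le> rM n \<xi>}
   \<union> (if b = Gt then {((n - 1, 2 * rM n \<xi>), (n, 2 * rM n \<xi> + 1))}
      else {((n, 2 * rm n \<xi> - 1), (n - 1, 2 * rm n \<xi>))})"
  unfolding Abar_def Tw_arrows_def image_Un relabel_plain_arrows relabel_arrows_into_n
    relabel_arrows_out_of_n relabel_extra_arrow ..

lemma Abar_cases:
  assumes "(u, w) \<in> Abar n \<xi> b"
  obtains (plain) i j p where "(j, p - 1) \<in> Ihat n \<xi>" "(i, p) \<in> Ihat n \<xi>" "i = j + 1 \<or> j = i + 1"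
      "{i, j} \<noteq> {n - 1, n}" "u = (fold_row j, 2*p - 2)" "w = (fold_row i, 2*p)"
  | (into_n) p where "rm n \<xi> + 1 \<le> p" "p \<le> rM n \<xi>" "u = (n - 1, 2*p - 2)" "w = (n, 2*p - 1)"
  | (out_of_n) p where "rm n \<xi> + 1 \<le> p" "p \<le> rM n \<xi>" "u = (n, 2*p - 1)" "w = (n - 1, 2*p)"
  | (extra_Gt) "b = Gt" "u = (n - 1, 2 * rM n \<xi>)" "w = (n, 2 * rM n \<xi> + 1)"
  | (extra_Lt) "b = Lt" "u = (n, 2 * rm n \<xi> - 1)" "w = (n - 1, 2 * rm n \<xi>)"
  using assms unfolding Abar_eq by (cases b) (auto split: if_splits)

lemma Abar_plainI:
  assumes "(j, p - 1) \<in> Ihat n \<xi>" "(i, p) \<in> Ihat n \<xi>" "i = j + 1 \<or> j = i + 1" "{i, j} \<noteq> {n - 1, n}"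
  shows "((fold_row j, 2*p - 2), (fold_row i, 2*p)) \<in> Abar n \<xi> b"
  using assms unfolding Abar_eq by blast

lemma Abar_into_nI:
  "rm n \<xi> + 1 \<le> p \<Longrightarrow> p \<le> rM n \<xi> \<Longrightarrow> ((n - 1, 2*p - 2), (n, 2*p - 1)) \<in> Abar n \<xi> b"
  unfolding Abar_eq by blast

lemma Abar_out_of_nI:
  "rm n \<xi> + 1 \<le> p \<Longrightarrow> p \<le> rM n \<xi> \<Longrightarrow> ((n, 2*p - 1), (n - 1, 2*p)) \<in> Abar n \<xi> b"
  unfolding Abar_eq by blast

lemma Abar_extraI:
  "b = Gt \<Longrightarrow> ((n - 1, 2 * rM n \<xi>), (n, 2 * rM n \<xi> + 1)) \<in> Abar n \<xi> b"
  "b = Lt \<Longrightarrow> ((n, 2 * rm n \<xi> - 1), (n - 1, 2 * rm n \<xi>)) \<in> Abar n \<xi> b"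
  unfolding Abar_eq by simp_all

lemma Ihat_row_segment:
  assumes "1 \<le> j" "j \<le> 2*n - 2"
  shows "is_segment 4 {2*q | q. (j, q) \<in> Ihat n \<xi>}"
proof -
  let ?lo = "\<xi> (2*n - 1 - j) - (2 * int n - 1) + 2"
  have mirror: "odd (\<xi> (2*n - 1 - j) - \<xi> j)" "\<bar>\<xi> (2*n - 1 - j) - \<xi> j\<bar> \<le> 2 * int n - 3"
    using height_mirror assms by auto
  have "(j, q) \<in> Ihat n \<xi> \<longleftrightarrow> ?lo \<le> q \<and> q \<le> \<xi> j \<and> 2 dvd q - ?lo" for q
    using mirror(1) assms unfolding mem_Ihat by presburger
  then have "{2*q | q. (j, q) \<in> Ihat n \<xi>} = {2*q + 0 | q. ?lo \<le> q \<and> q \<le> \<xi> j \<and> 2 dvd q - ?lo}"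
    by simp
  moreover have "?lo \<le> \<xi> j" "2 dvd \<xi> j - ?lo" using mirror by presburger+
  ultimately show ?thesis using is_segment_affine[of 2 ?lo "\<xi> j" 2 0] by simp
qed

lemma Itw_row_off_n_segment:
  assumes "\<iota> \<in> {1..2*n - 1}" "\<iota> \<noteq> n"
  shows "is_segment 4 {r. (\<iota>, r) \<in> Itw n \<xi> b}"
proof -
  define j where "j = (if \<iota> \<le> n - 1 then \<iota> else \<iota> - 1)"
  have j: "1 \<le> j" "j \<le> 2*n - 2" using assms n_ge_2 unfolding j_def by auto
  have "(\<iota>, r) = dbl (phi n (j', q)) \<longleftrightarrow> j' = j \<and> r = 2*q" if "(j', q) \<in> Ihat n \<xi>" for j' q r
    using Ihat_row_range[OF that] assms n_ge_2 unfolding j_def dbl_def phi_def by auto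
  then have "{r. (\<iota>, r) \<in> Itw n \<xi> b} = {2*q | q. (j, q) \<in> Ihat n \<xi>}"
    using assms(2) unfolding Itw_eq by auto
  then show ?thesis using Ihat_row_segment[OF j] by simp
qed

lemma Itw_row_n_segment: "is_segment 2 {r. (n, r) \<in> Itw n \<xi> b}"
proof -
  define lo where "lo = (if b = Gt then rm n \<xi> + 1 else rm n \<xi>)"
  define hi where "hi = (if b = Gt then rM n \<xi> + 1 else rM n \<xi>)"
  have "(n, r) \<notin> (dbl \<circ> phi n) ` Ihat n \<xi>" for r
  proof
    assume "(n, r) \<in> (dbl \<circ> phi n) ` Ihat n \<xi>"
    then obtain j q where "(j, q) \<in> Ihat n \<xi>" "(n, r) = dbl (phi n (j, q))" by auto
    then show False using Ihat_row_range n_ge_2 by (auto simp: dbl_def phi_def split: if_splits)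
  qed
  then have "(n, r) \<in> Itw n \<xi> b \<longleftrightarrow> (\<exists>p. rm n \<xi> + 1 \<le> p \<and> p \<le> rM n \<xi> \<and> r = 2*p - 1) \<or> r = extra_level b"
    for r unfolding Itw_eq by blast
  then have "{r. (n, r) \<in> Itw n \<xi> b} = {2*p + (-1) | p. lo \<le> p \<and> p \<le> hi \<and> 1 dvd p - lo}"
    unfolding lo_def hi_def extra_level_def using rM_minus_rm n_ge_2 by (cases b) (auto; presburger)+
  moreover have "lo \<le> hi" unfolding lo_def hi_def using rM_minus_rm n_ge_2 by simp
  ultimately show ?thesis using is_segment_affine[of 1 lo hi 2 "-1"] by simp
qed

lemma Itw_rows_segments:
  "\<forall>\<iota> \<in> {1..2*n - 1}. is_segment (if \<iota> = n then 2 else 4) {r. (\<iota>, r) \<in> Itw n \<xi> b}"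
  using Itw_row_off_n_segment Itw_row_n_segment by simp

lemma Ihat_in_Ibar:
  assumes "(j, q) \<in> Ihat n \<xi>"
  shows "(fold_row j, 2*q) \<in> Ibar n \<xi> b"
proof -
  have "(fold_row j, 2*q) \<in> (\<lambda>(j, q). (fold_row j, 2*q)) ` Ihat n \<xi>"
    using assms by (rule rev_image_eqI) simp
  then show ?thesis unfolding Ibar_eq by blast
qed

text \<open>Rows \<open>j\<close> and \<open>2n - 1 - j\<close> of \<open>\<Gamma>\<^sub>Q\<close>, which are folded together, carry levels of opposite
  parity.\<close>

lemma Ihat_fold_row_inj:
  assumes "(j1, q) \<in> Ihat n \<xi>" "(j2, q + 2) \<in> Ihat n \<xi>" "fold_row j1 = fold_row j2"
  shows "j1 = j2"
proof (rule ccontr)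
  assume "j1 \<noteq> j2"
  have "1 \<le> j1" "j1 \<le> 2*n - 2" "1 \<le> j2" "j2 \<le> 2*n - 2" using assms Ihat_row_range by auto
  then have "j2 = 2*n - 1 - j1" using fold_row_cases[of j1] fold_row_cases[of j2] assms(3) \<open>j1 \<noteq> j2\<close> by linarith
  then have "odd (\<xi> j2 - \<xi> j1)" using height_mirror \<open>1 \<le> j1\<close> \<open>j1 \<le> 2*n - 2\<close> by simp
  moreover have "even (q - \<xi> j1)" "even (q + 2 - \<xi> j2)" using assms by (auto simp: mem_Ihat)
  ultimately show False by presburger
qed

lemma Ibar_vertical_pair:
  assumes "i \<noteq> n" "(i, r - 2) \<in> Ibar n \<xi> b" "(i, r + 2) \<in> Ibar n \<xi> b"
  obtains j p where "r = 2*p" "fold_row j = i" "(j, p - 1) \<in> Ihat n \<xi>" "(j, p + 1) \<in> Ihat n \<xi>"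
proof -
  obtain j1 q1 where h1: "(j1, q1) \<in> Ihat n \<xi>" "i = fold_row j1" "r - 2 = 2*q1"
    using assms(1,2) mem_Ibar_off_n by blast
  obtain j2 q2 where h2: "(j2, q2) \<in> Ihat n \<xi>" "i = fold_row j2" "r + 2 = 2*q2"
    using assms(1,3) mem_Ibar_off_n by blast
  have "q2 = q1 + 2" using h1(3) h2(3) by simp
  then have "(j2, q1 + 2) \<in> Ihat n \<xi>" using h2(1) by simp
  then have "j1 = j2" using Ihat_fold_row_inj[of j1 q1 j2] h1(1,2) h2(2) by simp
  then show thesis using h1 \<open>(j2, q1 + 2) \<in> Ihat n \<xi>\<close> by (intro that[of "q1 + 1" j1]) (auto simp: add.commute)
qed

lemma folded_mesh:
  assumes "(j, p - 1) \<in> Ihat n \<xi>" "(j, p + 1) \<in> Ihat n \<xi>"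
    and "k = fold_row j + 1 \<or> k + 1 = fold_row j" "1 \<le> k" "k \<le> n - 1"
  obtains i where "(i, p) \<in> Ihat n \<xi>" "i = j + 1 \<or> j = i + 1" "fold_row i = k" "{i, j} \<noteq> {n - 1, n}"
proof -
  have j: "1 \<le> j" "j \<le> 2*n - 2" using assms(1) Ihat_row_range by auto
  consider "j \<le> n - 1" "k = j + 1" | "j \<le> n - 1" "k + 1 = j" | "n \<le> j" "k = 2*n - j" | "n \<le> j" "k + 1 = 2*n - 1 - j"
    using assms(3) j unfolding fold_row_def by (auto split: if_splits)
  then show thesis
  proof cases
    case 1
    then have "(j + 1, p) \<in> Ihat n \<xi>" using Ihat_mesh_succ[OF assms(1,2)] assms(5) n_ge_2 by simp
    then show thesis using 1 j assms(4,5) central_pair_iff by (intro that[of "j + 1"]) (auto simp: fold_row_def)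
  next
    case 2
    then have "(j - 1, p) \<in> Ihat n \<xi>" using Ihat_mesh_pred[OF assms(1,2)] assms(4) by simp
    then show thesis using 2 j assms(4,5) central_pair_iff by (intro that[of "j - 1"]) (auto simp: fold_row_def)
  next
    case 3
    then have "(j - 1, p) \<in> Ihat n \<xi>" using Ihat_mesh_pred[OF assms(1,2)] assms(5) n_ge_2 by simp
    then show thesis using 3 j assms(4,5) central_pair_iff by (intro that[of "j - 1"]) (auto simp: fold_row_def)
  next
    case 4
    then have "(j + 1, p) \<in> Ihat n \<xi>" using Ihat_mesh_succ[OF assms(1,2)] assms(4) by simp
    then show thesis using 4 j assms(4,5) central_pair_iff by (intro that[of "j + 1"]) (auto simp: fold_row_def)
  qed
qed

lemma arrows_from_outer_row:
  assumes "fold_row j = i" "i \<le> n - 2" "(j, p - 1) \<in> Ihat n \<xi>" "(j, p + 1) \<in> Ihat n \<xi>"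
  shows "{y. ((i, 2*p - 2), y) \<in> Abar n \<xi> b} = {(k, 2*p) | k. k \<in> {i - 1, i + 1} \<and> k \<ge> 1}"
proof (intro set_eqI iffI)
  fix y assume "y \<in> {y. ((i, 2*p - 2), y) \<in> Abar n \<xi> b}"
  then have "((i, 2*p - 2), y) \<in> Abar n \<xi> b" by simp
  then show "y \<in> {(k, 2*p) | k. k \<in> {i - 1, i + 1} \<and> k \<ge> 1}"
  proof (cases rule: Abar_cases)
    case (plain i' j' p')
    then have "fold_row i' = fold_row j' + 1 \<or> fold_row i' + 1 = fold_row j'" "1 \<le> fold_row i'"
      using fold_row_adjacent[of i' j'] fold_row_range[of i'] Ihat_row_range by auto
    then show ?thesis using plain by auto
  qed (use assms(2) n_ge_2 in auto)
next
  fix y assume "y \<in> {(k, 2*p) | k. k \<in> {i - 1, i + 1} \<and> k \<ge> 1}"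
  then obtain k where k: "k \<in> {i - 1, i + 1}" "1 \<le> k" "y = (k, 2*p)" by blast
  then have "k = fold_row j + 1 \<or> k + 1 = fold_row j" "1 \<le> k" "k \<le> n - 1"
    using assms(1,2) n_ge_2 by auto
  then obtain i' where "(i', p) \<in> Ihat n \<xi>" "i' = j + 1 \<or> j = i' + 1" "fold_row i' = k" "{i', j} \<noteq> {n - 1, n}"
    by (rule folded_mesh[OF assms(3,4)])
  then have "((fold_row j, 2*p - 2), (fold_row i', 2*p)) \<in> Abar n \<xi> b" using Abar_plainI assms(3) by blast
  then show "y \<in> {y. ((i, 2*p - 2), y) \<in> Abar n \<xi> b}" using assms(1) k(3) \<open>fold_row i' = k\<close> by simp
qed

lemma arrows_into_outer_row:
  assumes "fold_row j = i" "i \<le> n - 2" "(j, p - 1) \<in> Ihat n \<xi>" "(j, p + 1) \<in> Ihat n \<xi>"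
  shows "{x. (x, (i, 2*p + 2)) \<in> Abar n \<xi> b} = {(k, 2*p) | k. k \<in> {i - 1, i + 1} \<and> k \<ge> 1}"
proof (intro set_eqI iffI)
  fix x assume "x \<in> {x. (x, (i, 2*p + 2)) \<in> Abar n \<xi> b}"
  then have "(x, (i, 2*p + 2)) \<in> Abar n \<xi> b" by simp
  then show "x \<in> {(k, 2*p) | k. k \<in> {i - 1, i + 1} \<and> k \<ge> 1}"
  proof (cases rule: Abar_cases)
    case (plain i' j' p')
    then have "fold_row j' = fold_row i' + 1 \<or> fold_row j' + 1 = fold_row i'" "1 \<le> fold_row j'"
      using fold_row_adjacent[of j' i'] fold_row_range[of j'] Ihat_row_range by (auto simp: insert_commute)
    then show ?thesis using plain by auto
  qed (use assms(2) n_ge_2 in auto)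
next
  fix x assume "x \<in> {(k, 2*p) | k. k \<in> {i - 1, i + 1} \<and> k \<ge> 1}"
  then obtain k where k: "k \<in> {i - 1, i + 1}" "1 \<le> k" "x = (k, 2*p)" by blast
  then have "k = fold_row j + 1 \<or> k + 1 = fold_row j" "1 \<le> k" "k \<le> n - 1"
    using assms(1,2) n_ge_2 by auto
  then obtain i' where "(i', p) \<in> Ihat n \<xi>" "i' = j + 1 \<or> j = i' + 1" "fold_row i' = k" "{i', j} \<noteq> {n - 1, n}"
    by (rule folded_mesh[OF assms(3,4)])
  then have "((fold_row i', 2*(p + 1) - 2), (fold_row j, 2*(p + 1))) \<in> Abar n \<xi> b"
    using Abar_plainI[of i' "p + 1" j] assms(4) by (auto simp: insert_commute)
  then show "x \<in> {x. (x, (i, 2*p + 2)) \<in> Abar n \<xi> b}"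
    using assms(1) k(3) \<open>fold_row i' = k\<close> by (simp add: algebra_simps)
qed

lemma mesh_outer_row:
  assumes i: "i \<le> n - 2" and lower: "(i, r - 2) \<in> Ibar n \<xi> b" and upper: "(i, r + 2) \<in> Ibar n \<xi> b"
  shows "(i + 1, r) \<in> Ibar n \<xi> b \<and> (i \<ge> 2 \<longrightarrow> (i - 1, r) \<in> Ibar n \<xi> b)
        \<and> {y. ((i, r - 2), y) \<in> Abar n \<xi> b} = {(k, r) | k. k \<in> {i - 1, i + 1} \<and> k \<ge> 1}
        \<and> {x. (x, (i, r + 2)) \<in> Abar n \<xi> b} = {(k, r) | k. k \<in> {i - 1, i + 1} \<and> k \<ge> 1}"
proof -
  have "i \<noteq> n" using i n_ge_2 by simp
  obtain j p where r: "r = 2*p" and j: "fold_row j = i"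
      and P: "(j, p - 1) \<in> Ihat n \<xi>" "(j, p + 1) \<in> Ihat n \<xi>"
    using Ibar_vertical_pair[OF \<open>i \<noteq> n\<close> lower upper] by blast
  have "(k, 2*p) \<in> Ibar n \<xi> b" if k: "k = fold_row j + 1 \<or> k + 1 = fold_row j" "1 \<le> k" "k \<le> n - 1" for k
  proof -
    obtain i' where "(i', p) \<in> Ihat n \<xi>" "i' = j + 1 \<or> j = i' + 1" "fold_row i' = k" "{i', j} \<noteq> {n - 1, n}"
      by (rule folded_mesh[OF P k])
    then show ?thesis using Ihat_in_Ibar[of i' p] by simp
  qed
  then have "(i + 1, 2*p) \<in> Ibar n \<xi> b" "i \<ge> 2 \<longrightarrow> (i - 1, 2*p) \<in> Ibar n \<xi> b" using i j n_ge_2 by auto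
  then show ?thesis
    unfolding r using arrows_from_outer_row[OF j i P, of b] arrows_into_outer_row[OF j i P, of b] by blast
qed

lemma fold_row_next_to_central:
  assumes "fold_row j = n - 1" "1 \<le> i" "i \<le> 2*n - 2" "1 \<le> j" "j \<le> 2*n - 2"
    "i = j + 1 \<or> j = i + 1" "{i, j} \<noteq> {n - 1, n}"
  shows "fold_row i = n - 2 \<and> 1 \<le> n - 2"
  using fold_row_adjacent[OF assms(2-7)] fold_row_range[OF assms(2,3)] assms(1) by auto

lemma inner_row_levels:
  assumes "fold_row j = n - 1" "(j, q) \<in> Ihat n \<xi>"
  shows "rm n \<xi> \<le> q \<and> q \<le> rM n \<xi>"
proof -
  have "j = n - 1 \<or> j = n" using fold_row_cases[of j] assms Ihat_row_range n_ge_2 by auto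
  then have "(n - 1, q) \<in> Ihat n \<xi> \<or> (n, q) \<in> Ihat n \<xi>" using assms(2) by auto
  then show ?thesis unfolding central_rows .
qed

lemma arrows_from_inner_row:
  assumes "fold_row j = n - 1" "(j, p - 1) \<in> Ihat n \<xi>" "(j, p + 1) \<in> Ihat n \<xi>"
  shows "{y. ((n - 1, 2*p - 2), y) \<in> Abar n \<xi> b} = {(k, 2*p) | k. k = n - 2 \<and> k \<ge> 1} \<union> {(n, 2*p - 1)}"
proof -
  have levels: "rm n \<xi> + 1 \<le> p" "p + 1 \<le> rM n \<xi>"
    using inner_row_levels[OF assms(1,2)] inner_row_levels[OF assms(1,3)] by auto
  show ?thesis
  proof (intro set_eqI iffI)
    fix y assume "y \<in> {y. ((n - 1, 2*p - 2), y) \<in> Abar n \<xi> b}"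
    then have "((n - 1, 2*p - 2), y) \<in> Abar n \<xi> b" by simp
    then show "y \<in> {(k, 2*p) | k. k = n - 2 \<and> k \<ge> 1} \<union> {(n, 2*p - 1)}"
    proof (cases rule: Abar_cases)
      case (plain i' j' p')
      then show ?thesis using fold_row_next_to_central[of j' i'] Ihat_row_range by auto
    qed (use levels n_ge_2 in auto)
  next
    fix y assume "y \<in> {(k, 2*p) | k. k = n - 2 \<and> k \<ge> 1} \<union> {(n, 2*p - 1)}"
    then consider "1 \<le> n - 2" "y = (n - 2, 2*p)" | "y = (n, 2*p - 1)" by blast
    then show "y \<in> {y. ((n - 1, 2*p - 2), y) \<in> Abar n \<xi> b}"
    proof cases
      case 1
      then have "n - 2 = fold_row j + 1 \<or> n - 2 + 1 = fold_row j" "1 \<le> n - 2" "n - 2 \<le> n - 1"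
        using assms(1) by auto
      then obtain i' where "(i', p) \<in> Ihat n \<xi>" "i' = j + 1 \<or> j = i' + 1" "fold_row i' = n - 2" "{i', j} \<noteq> {n - 1, n}"
        by (rule folded_mesh[OF assms(2,3)])
      then show ?thesis using Abar_plainI[of j p i'] assms(1,2) 1 by simp
    next
      case 2
      then show ?thesis using Abar_into_nI[of p] levels by simp
    qed
  qed
qed

lemma arrows_into_inner_row:
  assumes "fold_row j = n - 1" "(j, p - 1) \<in> Ihat n \<xi>" "(j, p + 1) \<in> Ihat n \<xi>"
  shows "{x. (x, (n - 1, 2*p + 2)) \<in> Abar n \<xi> b} = {(k, 2*p) | k. k = n - 2 \<and> k \<ge> 1} \<union> {(n, 2*p + 1)}"
proof -
  have levels: "rm n \<xi> + 1 \<le> p" "p + 1 \<le> rM n \<xi>"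
    using inner_row_levels[OF assms(1,2)] inner_row_levels[OF assms(1,3)] by auto
  show ?thesis
  proof (intro set_eqI iffI)
    fix x assume "x \<in> {x. (x, (n - 1, 2*p + 2)) \<in> Abar n \<xi> b}"
    then have "(x, (n - 1, 2*p + 2)) \<in> Abar n \<xi> b" by simp
    then show "x \<in> {(k, 2*p) | k. k = n - 2 \<and> k \<ge> 1} \<union> {(n, 2*p + 1)}"
    proof (cases rule: Abar_cases)
      case (plain i' j' p')
      then show ?thesis using fold_row_next_to_central[of i' j'] Ihat_row_range by (auto simp: insert_commute)
    qed (use levels n_ge_2 in auto)
  next
    fix x assume "x \<in> {(k, 2*p) | k. k = n - 2 \<and> k \<ge> 1} \<union> {(n, 2*p + 1)}"
    then consider "1 \<le> n - 2" "x = (n - 2, 2*p)" | "x = (n, 2*p + 1)" by blast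
    then show "x \<in> {x. (x, (n - 1, 2*p + 2)) \<in> Abar n \<xi> b}"
    proof cases
      case 1
      then have "n - 2 = fold_row j + 1 \<or> n - 2 + 1 = fold_row j" "1 \<le> n - 2" "n - 2 \<le> n - 1"
        using assms(1) by auto
      then obtain i' where "(i', p) \<in> Ihat n \<xi>" "i' = j + 1 \<or> j = i' + 1" "fold_row i' = n - 2" "{i', j} \<noteq> {n - 1, n}"
        by (rule folded_mesh[OF assms(2,3)])
      then show ?thesis
        using Abar_plainI[of i' "p + 1" j] assms(1,3) 1 by (auto simp: insert_commute algebra_simps)
    next
      case 2
      then show ?thesis using Abar_out_of_nI[of "p + 1"] levels by (simp add: algebra_simps)
    qed
  qed
qed

lemma mesh_inner_row:
  assumes lower: "(n - 1, r - 2) \<in> Ibar n \<xi> b" and upper: "(n - 1, r + 2) \<in> Ibar n \<xi> b"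
  shows "(n - 2 \<ge> 1 \<longrightarrow> (n - 2, r) \<in> Ibar n \<xi> b)
        \<and> (n, r - 1) \<in> Ibar n \<xi> b \<and> (n, r + 1) \<in> Ibar n \<xi> b
        \<and> {y. ((n - 1, r - 2), y) \<in> Abar n \<xi> b} = {(k, r) | k. k = n - 2 \<and> k \<ge> 1} \<union> {(n, r - 1)}
        \<and> {x. (x, (n - 1, r + 2)) \<in> Abar n \<xi> b} = {(k, r) | k. k = n - 2 \<and> k \<ge> 1} \<union> {(n, r + 1)}"
proof -
  have "n - 1 \<noteq> n" using n_ge_2 by simp
  obtain j p where r: "r = 2*p" and j: "fold_row j = n - 1"
      and P: "(j, p - 1) \<in> Ihat n \<xi>" "(j, p + 1) \<in> Ihat n \<xi>"
    using Ibar_vertical_pair[OF \<open>n - 1 \<noteq> n\<close> lower upper] by blast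
  have outer_neighbour: "(n - 2, 2*p) \<in> Ibar n \<xi> b" if n3: "1 \<le> n - 2"
  proof -
    have "n - 2 = fold_row j + 1 \<or> n - 2 + 1 = fold_row j" "1 \<le> n - 2" "n - 2 \<le> n - 1"
      using j n3 by auto
    then obtain i' where "(i', p) \<in> Ihat n \<xi>" "i' = j + 1 \<or> j = i' + 1" "fold_row i' = n - 2" "{i', j} \<noteq> {n - 1, n}"
      by (rule folded_mesh[OF P])
    then show ?thesis using Ihat_in_Ibar[of i' p] by simp
  qed
  have levels: "rm n \<xi> + 1 \<le> p" "p + 1 \<le> rM n \<xi>"
    using inner_row_levels[OF j P(1)] inner_row_levels[OF j P(2)] by auto
  then have "(n, 2*p - 1) \<in> Ibar n \<xi> b \<and> (n, 2*p + 1) \<in> Ibar n \<xi> b"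
    unfolding mem_Ibar_n by (auto intro!: exI[of _ p] exI[of _ "p + 1"])
  then show ?thesis unfolding r
    using outer_neighbour arrows_from_inner_row[OF j P, of b] arrows_into_inner_row[OF j P, of b] by blast
qed

lemma center_row_pair:
  assumes "(n, r - 1) \<in> Ibar n \<xi> b" "(n, r + 1) \<in> Ibar n \<xi> b"
  obtains p where "r = 2*p"
    "(rm n \<xi> + 1 \<le> p \<and> p \<le> rM n \<xi>) \<or> (b = Lt \<and> p = rm n \<xi>)"
    "(rm n \<xi> \<le> p \<and> p \<le> rM n \<xi> - 1) \<or> (b = Gt \<and> p = rM n \<xi>)"
proof -
  have "rM n \<xi> - rm n \<xi> \<ge> 2" using rM_minus_rm n_ge_2 by simp
  moreover have "(\<exists>p. rm n \<xi> + 1 \<le> p \<and> p \<le> rM n \<xi> \<and> r = 2*p) \<or> r = extra_level b + 1"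
    "(\<exists>p. rm n \<xi> + 1 \<le> p \<and> p \<le> rM n \<xi> \<and> r = 2*p - 2) \<or> r = extra_level b - 1"
    using assms unfolding mem_Ibar_n by auto
  ultimately show thesis unfolding extra_level_def by (cases b) (auto intro: that)
qed

lemma mesh_center_row:
  assumes lower: "(n, r - 1) \<in> Ibar n \<xi> b" and upper: "(n, r + 1) \<in> Ibar n \<xi> b"
  shows "(n - 1, r) \<in> Ibar n \<xi> b
        \<and> {y. ((n, r - 1), y) \<in> Abar n \<xi> b} = {(n - 1, r)}
        \<and> {x. (x, (n, r + 1)) \<in> Abar n \<xi> b} = {(n - 1, r)}"
proof -
  obtain p where r: "r = 2*p"
    and out_level: "(rm n \<xi> + 1 \<le> p \<and> p \<le> rM n \<xi>) \<or> (b = Lt \<and> p = rm n \<xi>)"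
    and in_level: "(rm n \<xi> \<le> p \<and> p \<le> rM n \<xi> - 1) \<or> (b = Gt \<and> p = rM n \<xi>)"
    using center_row_pair[OF lower upper] by blast
  have vertex: "(n - 1, r) \<in> Ibar n \<xi> b"
  proof -
    have "rm n \<xi> \<le> p" "p \<le> rM n \<xi>" using out_level rM_minus_rm n_ge_2 by auto
    then obtain k where "(k, p) \<in> Ihat n \<xi>" "k \<in> {n - 1, n}" using central_rows[of p] by auto
    then show ?thesis using Ihat_in_Ibar[of k p] fold_row_central r by auto
  qed
  have out: "{y. ((n, r - 1), y) \<in> Abar n \<xi> b} = {(n - 1, r)}"
  proof (intro set_eqI iffI)
    fix y assume "y \<in> {y. ((n, r - 1), y) \<in> Abar n \<xi> b}"
    then have "((n, r - 1), y) \<in> Abar n \<xi> b" by simp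
    then show "y \<in> {(n - 1, r)}"
    proof (cases rule: Abar_cases)
      case (plain i' j' p')
      then show ?thesis using fold_row_range[of j'] Ihat_row_range[of j' "p' - 1"] n_ge_2 by auto
    qed (use r n_ge_2 in auto)
  next
    fix y assume "y \<in> {(n - 1, r)}"
    then show "y \<in> {y. ((n, r - 1), y) \<in> Abar n \<xi> b}"
      using out_level Abar_out_of_nI[of p] Abar_extraI(2) r by auto
  qed
  have inc: "{x. (x, (n, r + 1)) \<in> Abar n \<xi> b} = {(n - 1, r)}"
  proof (intro set_eqI iffI)
    fix x assume "x \<in> {x. (x, (n, r + 1)) \<in> Abar n \<xi> b}"
    then have "(x, (n, r + 1)) \<in> Abar n \<xi> b" by simp
    then show "x \<in> {(n - 1, r)}"
    proof (cases rule: Abar_cases)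
      case (plain i' j' p')
      then show ?thesis using fold_row_range[of i'] Ihat_row_range[of i' p'] n_ge_2 by auto
    qed (use r n_ge_2 in auto)
  next
    fix x assume "x \<in> {(n - 1, r)}"
    then show "x \<in> {x. (x, (n, r + 1)) \<in> Abar n \<xi> b}"
      using in_level Abar_into_nI[of "p + 1"] Abar_extraI(1) r by (auto simp: algebra_simps)
  qed
  show ?thesis using vertex out inc by blast
qed

end

theorem lemma3p22:
  fixes n :: nat and \<xi> :: "nat \<Rightarrow> int" and b :: flat
  assumes "n \<ge> 2" and "is_height n \<xi>"
  shows "(\<forall>\<iota> \<in> {1..2*n-1}. is_segment (if \<iota> = n then 2 else 4) {r. (\<iota>, r) \<in> Itw n \<xi> b})
   \<and> (\<forall>i r. i \<le> n - 2 \<and> (i, r - 2) \<in> Ibar n \<xi> b \<and> (i, r + 2) \<in> Ibar n \<xi> b \<longrightarrow>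
        (i + 1, r) \<in> Ibar n \<xi> b \<and> (i \<ge> 2 \<longrightarrow> (i - 1, r) \<in> Ibar n \<xi> b)
        \<and> {y. ((i, r - 2), y) \<in> Abar n \<xi> b} = {(k, r) | k. k \<in> {i - 1, i + 1} \<and> k \<ge> 1}
        \<and> {x. (x, (i, r + 2)) \<in> Abar n \<xi> b} = {(k, r) | k. k \<in> {i - 1, i + 1} \<and> k \<ge> 1})
   \<and> (\<forall>r. (n - 1, r - 2) \<in> Ibar n \<xi> b \<and> (n - 1, r + 2) \<in> Ibar n \<xi> b \<longrightarrow>
        (n - 2 \<ge> 1 \<longrightarrow> (n - 2, r) \<in> Ibar n \<xi> b)
        \<and> (n, r - 1) \<in> Ibar n \<xi> b \<and> (n, r + 1) \<in> Ibar n \<xi> b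
        \<and> {y. ((n - 1, r - 2), y) \<in> Abar n \<xi> b} = {(k, r) | k. k = n - 2 \<and> k \<ge> 1} \<union> {(n, r - 1)}
        \<and> {x. (x, (n - 1, r + 2)) \<in> Abar n \<xi> b} = {(k, r) | k. k = n - 2 \<and> k \<ge> 1} \<union> {(n, r + 1)})
   \<and> (\<forall>r. (n, r - 1) \<in> Ibar n \<xi> b \<and> (n, r + 1) \<in> Ibar n \<xi> b \<longrightarrow>
        (n - 1, r) \<in> Ibar n \<xi> b
        \<and> {y. ((n, r - 1), y) \<in> Abar n \<xi> b} = {(n - 1, r)}
        \<and> {x. (x, (n, r + 1)) \<in> Abar n \<xi> b} = {(n - 1, r)})"
proof -
  interpret height_function n \<xi> using assms by unfold_locales
  show ?thesis
  proof (intro conjI)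
  qed (fact Itw_rows_segments
      | intro allI impI, elim conjE, rule mesh_outer_row mesh_inner_row mesh_center_row; assumption)+
qed

end
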